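(* Let $\mu$ be a translation bounded measure on $\mathbb R^d$ and $\{h_R\}$ a smooth approximate van Hove family. Then $\{h_R\}$ is strong for $\mu$, i.e. the set $\{\frac1{\mathrm{vol}(B_R)}(h_R\mu)*\widetilde{(h_R\mu)}:R\ge1\}$ is weak-$*$ precompact in $\mathcal S'(\mathbb R^d)$.
   Context: A measure $\mu$ is translation bounded if $\sup_x|\mu|(x+K)<\infty$ for each compact $K$; such measures are tempered distributions. A smooth approximate van Hove family is a family $\{h_R\}_{R\ge1}$ of smooth compactly supported functions with $1_{B_R}\le h_R\le 1_{\overline{B_{R+1}}}$. $(h\mu)(f)=\mu(hf)$, $\widetilde f(x)=\overline{f(-x)}$, $\widetilde\psi(f)=\overline{\psi(\widetilde f)}$. *)

theory Defs
  imports "HOL-Analysis.Analysis"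
begin

text \<open>Iterated directional derivatives along a list of directions
  (Frechet derivative applied to the direction); head of list is the last derivative taken.\<close>
fun pderivs :: "'a::euclidean_space list \<Rightarrow> ('a \<Rightarrow> 'b::real_normed_vector) \<Rightarrow> 'a \<Rightarrow> 'b" where
  "pderivs [] f = f"
| "pderivs (v # vs) f = (\<lambda>x. frechet_derivative (pderivs vs f) (at x) v)"

definition smooth_fun :: "('a::euclidean_space \<Rightarrow> 'b::real_normed_vector) \<Rightarrow> bool" where
  "smooth_fun f \<longleftrightarrow> (\<forall>vs. set vs \<subseteq> Basis \<longrightarrow> (\<forall>x. pderivs vs f differentiable (at x)))"

definition schwartz :: "('a::euclidean_space \<Rightarrow> complex) set" where
  "schwartz = {f. smooth_fun f \<and>
     (\<forall>vs n. set vs \<subseteq> Basis \<longrightarrow> bounded (range (\<lambda>x. (1 + norm x) ^ n *\<^sub>R pderivs vs f x)))}"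

text \<open>A functional is represented as a total function
  that vanishes outside the Schwartz space, so that the weak-* topology of S' is the
  subspace topology of the product (pointwise) topology on the function type.\<close>
definition tempered_distributions :: "(('a::euclidean_space \<Rightarrow> complex) \<Rightarrow> complex) set" where
  "tempered_distributions = {T.
     (\<forall>f. f \<notin> schwartz \<longrightarrow> T f = 0) \<and>
     (\<forall>f\<in>schwartz. \<forall>g\<in>schwartz. \<forall>a b. T (\<lambda>x. a * f x + b * g x) = a * T f + b * T g) \<and>
     (\<exists>C N. \<forall>f\<in>schwartz. \<forall>M.
        (\<forall>x vs. length vs \<le> N \<longrightarrow> set vs \<subseteq> Basis \<longrightarrow>
             (1 + norm x) ^ N * norm (pderivs vs f x) \<le> M) \<longrightarrow> norm (T f) \<le> C * M)}"

definition weak_star_precompact :: "(('a::euclidean_space \<Rightarrow> complex) \<Rightarrow> complex) set \<Rightarrow> bool" where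
  "weak_star_precompact A \<longleftrightarrow> A \<subseteq> tempered_distributions \<and>
     compact (tempered_distributions \<inter> closure A)"

text \<open>A complex Radon measure mu is represented by its polar decomposition
  d mu = g d nu, with nu = |mu| a positive Borel measure and |g| = 1.
  Translation boundedness: sup_x |mu|(x + K) < infinity for every compact K.\<close>
definition translation_bounded :: "'a::euclidean_space measure \<Rightarrow> ('a \<Rightarrow> complex) \<Rightarrow> bool" where
  "translation_bounded \<nu> g \<longleftrightarrow> sets \<nu> = sets borel \<and> g \<in> borel_measurable borel \<and>
     (\<forall>x. norm (g x) = 1) \<and>
     (\<forall>K. compact K \<longrightarrow> (\<exists>C::real. \<forall>x. emeasure \<nu> ((\<lambda>y. x + y) ` K) \<le> ennreal C))"

definition smooth_approx_van_Hove :: "(real \<Rightarrow> 'a::euclidean_space \<Rightarrow> real) \<Rightarrow> bool" where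
  "smooth_approx_van_Hove h \<longleftrightarrow> (\<forall>R\<ge>1. smooth_fun (h R) \<and> compact (closure {x. h R x \<noteq> 0}) \<and>
     (\<forall>x. indicator (ball 0 R) x \<le> h R x \<and> h R x \<le> indicator (cball 0 (R + 1)) x))"

text \<open>The tempered distribution (1/vol B_R) (h mu) * (h mu)~ applied to f:
  with d mu = g d nu,  ((h mu) * (h mu)~)(f) = int int f(x - y) h(x) g(x) h(y) cnj(g y) dnu(x) dnu(y).\<close>
definition autocorr_approx ::
  "'a::euclidean_space measure \<Rightarrow> ('a \<Rightarrow> complex) \<Rightarrow> ('a \<Rightarrow> real) \<Rightarrow> real \<Rightarrow> ('a \<Rightarrow> complex) \<Rightarrow> complex" where
  "autocorr_approx \<nu> g hR R f =
     (if f \<in> schwartz then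
        complex_of_real (1 / measure lborel (ball (0::'a) R)) *
        (\<integral>y. (\<integral>x. f (x - y) * complex_of_real (hR x) * g x
                       * complex_of_real (hR y) * cnj (g y) \<partial>\<nu>) \<partial>\<nu>)
      else 0)"

end

theory Submission
  imports Defs
begin

text \<open>A translation bounded measure gives mass \<open>O(r^d)\<close> to balls of radius \<open>r \<ge> 1\<close>, so
  \<open>\<integral> (1 + |x - y|)^-(d+1) d|\<mu>|(x)\<close> is bounded uniformly in \<open>y\<close>.  Testing
  \<open>(h_R \<mu>) * (h_R \<mu>)~\<close> against \<open>f\<close> with \<open>(1 + |z|)^(d+1) |f z| \<le> M\<close> therefore gives at most
  \<open>M C |\<mu>|(B_(R+1))\<close>, which is \<open>O(M vol B_R)\<close>.  Hence all normalised autocorrelations lie in the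
  polar of a single ball of a Schwartz seminorm, and that polar is weak-* compact by Tychonoff's
  theorem (Banach--Alaoglu).\<close>

lemma smooth_fun_imp_borel_measurable:
  fixes h :: "'a::euclidean_space \<Rightarrow> 'b::euclidean_space"
  assumes "smooth_fun h"
  shows "h \<in> borel_measurable borel"
proof -
  have "h differentiable (at x)" for x
    using assms unfolding smooth_fun_def by (metis empty_set empty_subsetI pderivs.simps(1))
  then show ?thesis
    by (intro borel_measurable_continuous_onI continuous_at_imp_continuous_on ballI
        differentiable_imp_continuous_within)
qed

lemma pderivs_linear_combination:
  fixes f g :: "'a::euclidean_space \<Rightarrow> complex"
  assumes f: "smooth_fun f" and g: "smooth_fun g" and vs: "set vs \<subseteq> Basis"
  shows "pderivs vs (\<lambda>x. a * f x + b * g x) = (\<lambda>x. a * pderivs vs f x + b * pderivs vs g x)"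
  using vs
proof (induction vs)
  case Nil
  then show ?case by simp
next
  case (Cons v vs)
  then have IH: "pderivs vs (\<lambda>x. a * f x + b * g x) = (\<lambda>x. a * pderivs vs f x + b * pderivs vs g x)"
    by simp
  show ?case
  proof
    fix x
    have df: "(pderivs vs f has_derivative frechet_derivative (pderivs vs f) (at x)) (at x)"
      and dg: "(pderivs vs g has_derivative frechet_derivative (pderivs vs g) (at x)) (at x)"
      using f g Cons.prems unfolding smooth_fun_def frechet_derivative_works[symmetric] by auto
    have "((\<lambda>x. a * pderivs vs f x + b * pderivs vs g x) has_derivative
        (\<lambda>u. a * frechet_derivative (pderivs vs f) (at x) u
           + b * frechet_derivative (pderivs vs g) (at x) u)) (at x)"
      by (intro has_derivative_add has_derivative_mult_right df dg)
    from frechet_derivative_at[OF this]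
    show "pderivs (v # vs) (\<lambda>x. a * f x + b * g x) x
        = a * pderivs (v # vs) f x + b * pderivs (v # vs) g x"
      by (simp add: IH) metis
  qed
qed

lemma schwartz_linear_combination:
  assumes f: "f \<in> schwartz" and g: "g \<in> schwartz"
  shows "(\<lambda>x. a * f x + b * g x) \<in> schwartz"
proof -
  have sf: "smooth_fun f" and sg: "smooth_fun g" using f g by (auto simp: schwartz_def)
  have "smooth_fun (\<lambda>x. a * f x + b * g x)"
    unfolding smooth_fun_def
  proof (intro allI impI)
    fix vs :: "'a list" and x assume vs: "set vs \<subseteq> Basis"
    have "pderivs vs f differentiable (at x)" "pderivs vs g differentiable (at x)"
      using sf sg vs by (auto simp: smooth_fun_def)
    then show "pderivs vs (\<lambda>x. a * f x + b * g x) differentiable (at x)"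
      by (simp add: pderivs_linear_combination[OF sf sg vs])
  qed
  moreover have "bounded (range (\<lambda>x. (1 + norm x) ^ n *\<^sub>R pderivs vs (\<lambda>x. a * f x + b * g x) x))"
    if vs: "set vs \<subseteq> Basis" for vs n
  proof -
    let ?F = "\<lambda>x. (1 + norm x) ^ n *\<^sub>R pderivs vs f x"
    let ?G = "\<lambda>x. (1 + norm x) ^ n *\<^sub>R pderivs vs g x"
    have "bounded (range ?F)" "bounded (range ?G)"
      using f g vs by (auto simp: schwartz_def)
    then have "bounded ((*) a ` range ?F)" "bounded ((*) b ` range ?G)"
      by (auto intro: bounded_linear_image bounded_linear_mult_right)
    then have "bounded (range (\<lambda>x. a * ?F x + b * ?G x))"
      by (intro bounded_plus_comp) (simp_all add: image_image)
    moreover have "(1 + norm x) ^ n *\<^sub>R pderivs vs (\<lambda>x. a * f x + b * g x) x = a * ?F x + b * ?G x" for x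
      by (simp add: pderivs_linear_combination[OF sf sg vs] algebra_simps scaleR_conv_of_real)
    ultimately show ?thesis by simp
  qed
  ultimately show ?thesis by (simp add: schwartz_def)
qed

lemma schwartz_imp_borel_measurable: "f \<in> schwartz \<Longrightarrow> f \<in> borel_measurable borel"
  by (simp add: schwartz_def smooth_fun_imp_borel_measurable)

lemma schwartz_imp_bounded: "f \<in> schwartz \<Longrightarrow> \<exists>B. \<forall>x. norm (f x) \<le> B"
  unfolding schwartz_def bounded_iff
  by (auto elim!: allE[of _ "[]"] allE[of _ "0::nat"]) blast

lemma translation_bounded_sets: "translation_bounded \<nu> g \<Longrightarrow> sets \<nu> = sets borel"
  by (simp add: translation_bounded_def)

lemma translation_bounded_emeasure_compact_finite:
  assumes "translation_bounded \<nu> g" "compact K"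
  shows "emeasure \<nu> K < \<infinity>"
proof -
  obtain C where "\<And>x. emeasure \<nu> ((\<lambda>y. x + y) ` K) \<le> ennreal C"
    using assms unfolding translation_bounded_def by blast
  from this[of 0] show ?thesis
    by (simp add: order.strict_trans1)
qed

lemma translation_bounded_sigma_finite:
  assumes "translation_bounded \<nu> (g :: 'a::euclidean_space \<Rightarrow> complex)"
  shows "sigma_finite_measure \<nu>"
proof
  have sets: "sets \<nu> = sets borel" using assms by (rule translation_bounded_sets)
  show "\<exists>A. countable A \<and> A \<subseteq> sets \<nu> \<and> \<Union> A = space \<nu> \<and> (\<forall>a\<in>A. emeasure \<nu> a \<noteq> \<infinity>)"
  proof (intro exI[of _ "range (\<lambda>n. cball (0::'a) (real n))"] conjI ballI)
    show "\<Union> (range (\<lambda>n. cball (0::'a) (real n))) = space \<nu>"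
      by (auto simp: sets_eq_imp_space_eq[OF sets] real_arch_simple)
    show "emeasure \<nu> K \<noteq> \<infinity>" if "K \<in> range (\<lambda>n. cball (0::'a) (real n))" for K
      using that translation_bounded_emeasure_compact_finite[OF assms compact_cball] by (auto simp flip: less_top)
  qed (auto simp: sets)
qed

lemma cball_subset_union_unit_cubes:
  fixes y :: "'a::euclidean_space"
  assumes "r \<ge> 0"
  defines "corner \<equiv> \<lambda>p. \<Sum>i\<in>Basis. (y \<bullet> i - r + real (p i)) *\<^sub>R i"
  shows "cball y r \<subseteq> (\<Union>p\<in>PiE Basis (\<lambda>_. {..<nat \<lfloor>2 * r\<rfloor> + 1}). (\<lambda>u. corner p + u) ` cbox 0 One)"
proof
  fix x assume x: "x \<in> cball y r"
  define p where "p = restrict (\<lambda>i. nat \<lfloor>x \<bullet> i - y \<bullet> i + r\<rfloor>) Basis"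
  have coordinate_close: "\<bar>x \<bullet> i - y \<bullet> i\<bar> \<le> r" if "i \<in> Basis" for i
    using x Basis_le_norm[OF that, of "x - y"] by (auto simp: dist_norm inner_diff_left norm_minus_commute)
  have p_eq: "real (p i) = of_int \<lfloor>x \<bullet> i - y \<bullet> i + r\<rfloor>" if "i \<in> Basis" for i
    using that coordinate_close[OF that] by (simp add: p_def)
  have "p i < nat \<lfloor>2 * r\<rfloor> + 1" if "i \<in> Basis" for i
  proof -
    have "\<lfloor>x \<bullet> i - y \<bullet> i + r\<rfloor> \<le> \<lfloor>2 * r\<rfloor>"
      using coordinate_close[OF that] by (intro floor_mono) linarith
    then show ?thesis using that coordinate_close[OF that] by (simp add: p_def)
  qed
  then have "p \<in> PiE Basis (\<lambda>_. {..<nat \<lfloor>2 * r\<rfloor> + 1})" by (auto simp: p_def)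
  moreover have "x - corner p \<in> cbox 0 One"
    unfolding mem_box
  proof (intro ballI conjI)
    fix i :: 'a assume i: "i \<in> Basis"
    have "(x - corner p) \<bullet> i = (x \<bullet> i - y \<bullet> i + r) - of_int \<lfloor>x \<bullet> i - y \<bullet> i + r\<rfloor>"
      using i p_eq[OF i]
      by (simp add: corner_def inner_diff_left inner_sum_left inner_Basis if_distrib cong: if_cong)
    then show "0 \<bullet> i \<le> (x - corner p) \<bullet> i" "(x - corner p) \<bullet> i \<le> One \<bullet> i"
      using i by simp_all linarith
  qed
  ultimately show "x \<in> (\<Union>p\<in>PiE Basis (\<lambda>_. {..<nat \<lfloor>2 * r\<rfloor> + 1}). (\<lambda>u. corner p + u) ` cbox 0 One)"
    by (auto intro!: bexI[of _ p] image_eqI[of _ _ "x - corner p"])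
qed

text \<open>Covering a ball of radius \<open>r \<ge> 1\<close> by at most \<open>(3r)^d\<close> unit cubes.\<close>
lemma translation_bounded_emeasure_cball_le:
  assumes "translation_bounded \<nu> (g :: 'a::euclidean_space \<Rightarrow> complex)"
  obtains C where "C \<ge> 0" "\<And>y r. r \<ge> 1 \<Longrightarrow> emeasure \<nu> (cball y r) \<le> ennreal (C * r ^ DIM('a))"
proof -
  obtain C0 where C0: "\<And>x. emeasure \<nu> ((\<lambda>y. x + y) ` cbox (0::'a) One) \<le> ennreal C0"
    using assms unfolding translation_bounded_def by (meson compact_cbox)
  have sets: "sets \<nu> = sets borel" using assms by (rule translation_bounded_sets)
  have "emeasure \<nu> (cball y r) \<le> ennreal (max 0 C0 * 3 ^ DIM('a) * r ^ DIM('a))" if r: "r \<ge> 1" for y r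
  proof -
    define m where "m = nat \<lfloor>2 * r\<rfloor> + 1"
    define corner where "corner = (\<lambda>p. \<Sum>i\<in>Basis. (y \<bullet> i - r + real (p i)) *\<^sub>R (i::'a))"
    define P where "P = PiE (Basis::'a set) (\<lambda>_. {..<m})"
    have fin: "finite P" unfolding P_def by (simp add: finite_PiE)
    have cubes: "(\<lambda>p. (\<lambda>u. corner p + u) ` cbox 0 One) ` P \<subseteq> sets \<nu>"
      unfolding sets by (auto intro!: borel_closed compact_imp_closed compact_translation)
    have "emeasure \<nu> (cball y r) \<le> emeasure \<nu> (\<Union>p\<in>P. (\<lambda>u. corner p + u) ` cbox 0 One)"
      using cball_subset_union_unit_cubes[of r y] r cubes fin unfolding m_def corner_def P_def
      by (intro emeasure_mono) auto
    also have "\<dots> \<le> (\<Sum>p\<in>P. emeasure \<nu> ((\<lambda>u. corner p + u) ` cbox 0 One))"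
      by (rule emeasure_subadditive_finite[OF fin cubes])
    also have "\<dots> \<le> of_nat (card P) * ennreal (max 0 C0)"
      by (rule sum_bounded_above) (rule order_trans[OF C0 ennreal_leI], simp)
    also have "\<dots> = ennreal (real m ^ DIM('a) * max 0 C0)"
      by (simp add: P_def card_PiE ennreal_mult' ennreal_of_nat_eq_real_of_nat)
    also have "\<dots> \<le> ennreal (max 0 C0 * 3 ^ DIM('a) * r ^ DIM('a))"
    proof (rule ennreal_leI)
      have "real m \<le> 3 * r" unfolding m_def using r by linarith
      then have "real m ^ DIM('a) \<le> 3 ^ DIM('a) * r ^ DIM('a)"
        by (metis power_mono power_mult_distrib of_nat_0_le_iff)
      then show "real m ^ DIM('a) * max 0 C0 \<le> max 0 C0 * 3 ^ DIM('a) * r ^ DIM('a)"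
        by (simp add: mult.commute mult.left_commute mult_left_mono)
    qed
    finally show ?thesis .
  qed
  then show ?thesis by (intro that[of "max 0 C0 * 3 ^ DIM('a)"]) auto
qed

lemma inverse_power_le_dyadic_sum:
  fixes t :: real
  assumes t: "t \<ge> 0"
  shows "ennreal (1 / (1 + t) ^ N) \<le> (\<Sum>k. ennreal (2 ^ N / 2 ^ (k * N)) * of_bool (t \<le> 2 ^ k))"
proof -
  obtain n where "t < 2 ^ n" using real_arch_pow[of 2 t] by auto
  define k0 where "k0 = (LEAST k::nat. t \<le> 2 ^ k)"
  have k0: "t \<le> 2 ^ k0"
    using LeastI[of "\<lambda>k. t \<le> (2::real) ^ k" n] \<open>t < 2 ^ n\<close> unfolding k0_def by simp
  have "1 / (1 + t) ^ N \<le> 2 ^ N / 2 ^ (k0 * N)"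
  proof (cases k0)
    case 0
    have "1 / (1 + t) ^ N \<le> 1" using t by simp
    also have "1 \<le> (2::real) ^ N" by simp
    finally show ?thesis using 0 by simp
  next
    case (Suc j)
    have "2 ^ j \<le> t"
      using not_less_Least[of j "\<lambda>k. t \<le> 2 ^ k"] Suc unfolding k0_def by simp
    then have "(2 ^ j) ^ N \<le> (1 + t) ^ N" by (intro power_mono) auto
    then have "1 / (1 + t) ^ N \<le> 1 / (2 ^ j) ^ N"
      using t by (intro divide_left_mono) auto
    also have "1 / (2 ^ j) ^ N = (2::real) ^ N / 2 ^ (k0 * N)"
      using Suc by (simp add: power_add power_mult[symmetric])
    finally show ?thesis .
  qed
  then have "ennreal (1 / (1 + t) ^ N) \<le> (\<Sum>k\<in>{k0}. ennreal (2 ^ N / 2 ^ (k * N)) * of_bool (t \<le> 2 ^ k))"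
    using k0 by (simp add: ennreal_leI)
  also have "\<dots> \<le> (\<Sum>k. ennreal (2 ^ N / 2 ^ (k * N)) * of_bool (t \<le> 2 ^ k))"
    by (rule sum_le_suminf) simp_all
  finally show ?thesis .
qed

text \<open>Split into dyadic shells: the ball of radius \<open>2^k\<close> has mass \<open>O(2^{kd})\<close>, which the
  weight \<open>2^{-k(d+1)}\<close> turns into a geometric series.\<close>
lemma translation_bounded_decay_integral_bounded:
  assumes "translation_bounded \<nu> (g :: 'a::euclidean_space \<Rightarrow> complex)"
  obtains C where "C \<ge> 0" "\<And>y. (\<integral>\<^sup>+x. ennreal (1 / (1 + norm (x - y)) ^ Suc DIM('a)) \<partial>\<nu>) \<le> ennreal C"
proof -
  obtain C where C: "C \<ge> 0" "\<And>y r. r \<ge> 1 \<Longrightarrow> emeasure \<nu> (cball y r) \<le> ennreal (C * r ^ DIM('a))"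
    using translation_bounded_emeasure_cball_le[OF assms] by blast
  have sets: "sets \<nu> = sets borel" using assms by (rule translation_bounded_sets)
  define N where "N = Suc DIM('a)"
  have "(\<integral>\<^sup>+x. ennreal (1 / (1 + norm (x - y)) ^ N) \<partial>\<nu>) \<le> ennreal (2 ^ N * C * 2)" for y
  proof -
    have "(\<integral>\<^sup>+x. ennreal (1 / (1 + norm (x - y)) ^ N) \<partial>\<nu>)
        \<le> (\<integral>\<^sup>+x. (\<Sum>k. ennreal (2 ^ N / 2 ^ (k * N)) * indicator (cball y (2 ^ k)) x) \<partial>\<nu>)"
      by (intro nn_integral_mono order_trans[OF inverse_power_le_dyadic_sum])
        (auto simp: indicator_def dist_norm norm_minus_commute)
    also have "\<dots> = (\<Sum>k. (\<integral>\<^sup>+x. ennreal (2 ^ N / 2 ^ (k * N)) * indicator (cball y (2 ^ k)) x \<partial>\<nu>))"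
      by (rule nn_integral_suminf) (simp add: measurable_cong_sets[OF sets refl] borel_measurable_times_ennreal borel_measurable_indicator borel_closed)
    also have "\<dots> = (\<Sum>k. ennreal (2 ^ N / 2 ^ (k * N)) * emeasure \<nu> (cball y (2 ^ k)))"
      by (subst nn_integral_cmult_indicator) (auto simp: sets)
    also have "\<dots> \<le> (\<Sum>k. ennreal (2 ^ N * C * (1/2) ^ k))"
    proof (intro suminf_le summableI)
      fix k :: nat
      have "(2::real) ^ (k * N) = (2 ^ k) ^ DIM('a) * 2 ^ k"
        by (simp add: N_def power_add power_mult mult.commute)
      then have "2 ^ N / 2 ^ (k * N) * (C * (2 ^ k) ^ DIM('a)) = 2 ^ N * C * (1/2::real) ^ k"
        by (simp add: power_one_over)
      moreover have "ennreal (2 ^ N / 2 ^ (k * N)) * emeasure \<nu> (cball y (2 ^ k))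
          \<le> ennreal (2 ^ N / 2 ^ (k * N)) * ennreal (C * (2 ^ k) ^ DIM('a))"
        by (intro mult_left_mono C(2)) auto
      ultimately show "ennreal (2 ^ N / 2 ^ (k * N)) * emeasure \<nu> (cball y (2 ^ k))
          \<le> ennreal (2 ^ N * C * (1/2) ^ k)"
        using C(1) by (simp add: ennreal_mult[symmetric])
    qed
    also have "\<dots> = ennreal (2 ^ N * C * 2)"
      using sums_mult[OF geometric_sums[of "1/2::real"], of "2 ^ N * C"] C(1)
      by (intro suminf_ennreal_eq) auto
    finally show ?thesis .
  qed
  then show ?thesis using C(1) unfolding N_def by (intro that[of "2 ^ Suc DIM('a) * C * 2"]) auto
qed

lemma norm_integral_le_nn_integral:
  fixes f :: "'b \<Rightarrow> 'c::{banach, second_countable_topology}"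
  shows "ennreal (norm (integral\<^sup>L M f)) \<le> (\<integral>\<^sup>+x. norm (f x) \<partial>M)"
  by (cases "integrable M f") (simp_all add: integral_norm_bound_ennreal not_integrable_integral_eq)

text \<open>With \<open>w = h g\<close> for the polar decomposition \<open>d\<mu> = g d\<nu>\<close>, this is
  \<open>((h\<mu>) * (h\<mu>)~)(f)\<close>.\<close>
definition autocorrelation_integral ::
  "'a::euclidean_space measure \<Rightarrow> ('a \<Rightarrow> complex) \<Rightarrow> ('a \<Rightarrow> complex) \<Rightarrow> complex" where
  "autocorrelation_integral \<nu> w f = (\<integral>y. (\<integral>x. f (x - y) * w x * cnj (w y) \<partial>\<nu>) \<partial>\<nu>)"

context
  fixes \<nu> :: "'a::euclidean_space measure" and w :: "'a \<Rightarrow> complex" and A :: "'a set"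
  assumes sets_eq: "sets \<nu> = sets borel"
    and w_measurable [measurable]: "w \<in> borel_measurable borel"
    and norm_w_le: "\<And>x. norm (w x) \<le> indicator A x"
    and A_sets: "A \<in> sets borel"
    and A_finite: "emeasure \<nu> A < \<infinity>"
begin

lemma norm_autocorrelation_integrand_le:
  "norm (f (x - y) * w x * cnj (w y)) \<le> norm (f (x - y)) * indicator A x * indicator A y"
  unfolding norm_mult complex_mod_cnj
  by (intro mult_mono norm_w_le) auto

lemma autocorrelation_integrand_measurable:
  assumes [measurable]: "f \<in> borel_measurable borel"
  shows "(\<lambda>x. f (x - y) * w x * cnj (w y)) \<in> borel_measurable \<nu>"
    and "(\<lambda>(y, x). f (x - y) * w x * cnj (w y)) \<in> borel_measurable (\<nu> \<Otimes>\<^sub>M \<nu>)"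
proof -
  have [measurable]: "(\<lambda>z. cnj (w z)) \<in> borel_measurable borel"
    by (intro borel_measurable_continuous_on[OF continuous_on_cnj] w_measurable) (rule continuous_on_id)
  show "(\<lambda>x. f (x - y) * w x * cnj (w y)) \<in> borel_measurable \<nu>"
    unfolding measurable_cong_sets[OF sets_eq refl] by measurable
  show "(\<lambda>(y, x). f (x - y) * w x * cnj (w y)) \<in> borel_measurable (\<nu> \<Otimes>\<^sub>M \<nu>)"
    unfolding measurable_cong_sets[OF sets_pair_measure_cong[OF sets_eq sets_eq] refl] by measurable
qed

lemma autocorrelation_inner_integrable:
  assumes "f \<in> borel_measurable borel" and f_le: "\<And>z. norm (f z) \<le> B"
  shows "integrable \<nu> (\<lambda>x. f (x - y) * w x * cnj (w y))"
proof (rule Bochner_Integration.integrable_bound)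
  show "integrable \<nu> (\<lambda>x. B * indicat_real A x)"
    using A_sets A_finite sets_eq by auto
  show "AE x in \<nu>. norm (f (x - y) * w x * cnj (w y)) \<le> norm (B * indicat_real A x)"
    using order_trans[OF norm_autocorrelation_integrand_le] f_le
    by (auto simp: indicator_def order_trans[OF norm_ge_zero f_le])
qed (rule autocorrelation_integrand_measurable(1)[OF assms(1)])

lemma autocorrelation_outer_integrable:
  assumes "sigma_finite_measure \<nu>"
    and f: "f \<in> borel_measurable borel" and f_le: "\<And>z. norm (f z) \<le> B"
  shows "integrable \<nu> (\<lambda>y. \<integral>x. f (x - y) * w x * cnj (w y) \<partial>\<nu>)"
proof (rule Bochner_Integration.integrable_bound)
  show "integrable \<nu> (\<lambda>y. B * measure \<nu> A * indicat_real A y)"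
    using A_sets A_finite sets_eq by auto
  show "(\<lambda>y. \<integral>x. f (x - y) * w x * cnj (w y) \<partial>\<nu>) \<in> borel_measurable \<nu>"
    using sigma_finite_measure.borel_measurable_lebesgue_integral[OF assms(1)
        autocorrelation_integrand_measurable(2)[OF f]] by simp
  have B: "B \<ge> 0" using order_trans[OF norm_ge_zero f_le] .
  have "norm (\<integral>x. f (x - y) * w x * cnj (w y) \<partial>\<nu>) \<le> B * indicat_real A y * measure \<nu> A" for y
  proof -
    have "norm (\<integral>x. f (x - y) * w x * cnj (w y) \<partial>\<nu>) \<le> (\<integral>x. B * indicat_real A y * indicat_real A x \<partial>\<nu>)"
    proof (rule Bochner_Integration.integral_norm_bound_integral)
      show "integrable \<nu> (\<lambda>x. B * indicat_real A y * indicat_real A x)"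
        using A_sets A_finite sets_eq by auto
      show "norm (f (x - y) * w x * cnj (w y)) \<le> B * indicat_real A y * indicat_real A x" for x
        using order_trans[OF norm_autocorrelation_integrand_le] f_le
        by (auto simp: indicator_def)
    qed (rule autocorrelation_inner_integrable[OF f f_le])
    also have "\<dots> = B * indicat_real A y * measure \<nu> A"
      using A_sets A_finite sets_eq by (simp add: less_top)
    finally show ?thesis .
  qed
  then show "AE y in \<nu>. norm (\<integral>x. f (x - y) * w x * cnj (w y) \<partial>\<nu>) \<le> norm (B * measure \<nu> A * indicat_real A y)"
    using B by (simp add: mult_ac)
qed

lemma autocorrelation_integral_linear:
  assumes "sigma_finite_measure \<nu>"
    and f: "f \<in> borel_measurable borel" "\<And>z. norm (f z) \<le> B"
    and f': "f' \<in> borel_measurable borel" "\<And>z. norm (f' z) \<le> B'"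
  shows "autocorrelation_integral \<nu> w (\<lambda>z. a * f z + b * f' z)
    = a * autocorrelation_integral \<nu> w f + b * autocorrelation_integral \<nu> w f'"
proof -
  have "(\<integral>x. (a * f (x - y) + b * f' (x - y)) * w x * cnj (w y) \<partial>\<nu>)
      = a * (\<integral>x. f (x - y) * w x * cnj (w y) \<partial>\<nu>) + b * (\<integral>x. f' (x - y) * w x * cnj (w y) \<partial>\<nu>)" for y
    using autocorrelation_inner_integrable[OF f, of y] autocorrelation_inner_integrable[OF f', of y]
    by (simp add: algebra_simps)
  then show ?thesis
    using autocorrelation_outer_integrable[OF assms(1) f] autocorrelation_outer_integrable[OF assms(1) f']
    by (simp add: autocorrelation_integral_def)
qed

lemma norm_autocorrelation_integral_le:
  assumes decay: "\<And>y. (\<integral>\<^sup>+x. ennreal (1 / (1 + norm (x - y)) ^ N) \<partial>\<nu>) \<le> ennreal C"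
    and C: "C \<ge> 0"
    and f_le: "\<And>z. (1 + norm z) ^ N * norm (f z) \<le> M"
  shows "norm (autocorrelation_integral \<nu> w f) \<le> M * C * measure \<nu> A"
proof -
  have M: "M \<ge> 0" using order_trans[OF _ f_le[of 0]] by simp
  have pointwise: "ennreal (norm (f (x - y) * w x * cnj (w y)))
      \<le> ennreal (M * indicator A y) * ennreal (1 / (1 + norm (x - y)) ^ N)" for x y
  proof -
    have "norm (f (x - y)) \<le> M * (1 / (1 + norm (x - y)) ^ N)"
      using f_le[of "x - y"] by (simp add: field_simps add_pos_nonneg)
    then have "norm (f (x - y) * w x * cnj (w y)) \<le> M * indicator A y * (1 / (1 + norm (x - y)) ^ N)"
      using order_trans[OF norm_autocorrelation_integrand_le] M
      by (auto simp: indicator_def mult_ac)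
    then show ?thesis using M by (simp add: ennreal_mult[symmetric] ennreal_leI)
  qed
  have inner: "ennreal (norm (\<integral>x. f (x - y) * w x * cnj (w y) \<partial>\<nu>)) \<le> ennreal (M * C) * indicator A y" for y
  proof -
    have weight: "(\<lambda>x. ennreal (1 / (1 + norm (x - y)) ^ N)) \<in> borel_measurable \<nu>"
      unfolding measurable_cong_sets[OF sets_eq refl] by measurable
    have "ennreal (norm (\<integral>x. f (x - y) * w x * cnj (w y) \<partial>\<nu>))
        \<le> (\<integral>\<^sup>+x. ennreal (M * indicator A y) * ennreal (1 / (1 + norm (x - y)) ^ N) \<partial>\<nu>)"
      by (intro order_trans[OF norm_integral_le_nn_integral] nn_integral_mono pointwise)
    also have "\<dots> = ennreal (M * indicator A y) * (\<integral>\<^sup>+x. ennreal (1 / (1 + norm (x - y)) ^ N) \<partial>\<nu>)"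
      by (rule nn_integral_cmult[OF weight])
    also have "\<dots> \<le> ennreal (M * indicator A y) * ennreal C"
      by (intro mult_left_mono decay) simp
    also have "\<dots> = ennreal (M * C) * indicator A y"
      using M C by (simp add: indicator_def ennreal_mult[symmetric])
    finally show ?thesis .
  qed
  have "ennreal (norm (autocorrelation_integral \<nu> w f))
      \<le> (\<integral>\<^sup>+y. ennreal (M * C) * indicator A y \<partial>\<nu>)"
    unfolding autocorrelation_integral_def
    by (intro order_trans[OF norm_integral_le_nn_integral] nn_integral_mono inner)
  also have "\<dots> = ennreal (M * C * measure \<nu> A)"
    using A_sets A_finite sets_eq M C
    by (simp add: nn_integral_cmult_indicator emeasure_eq_ennreal_measure ennreal_mult less_top)
  finally show ?thesis using M C by simp
qed

end

definition schwartz_seminorm_le :: "nat \<Rightarrow> ('a::euclidean_space \<Rightarrow> complex) \<Rightarrow> real \<Rightarrow> bool" where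
  "schwartz_seminorm_le N f M \<longleftrightarrow> (\<forall>x vs. length vs \<le> N \<longrightarrow> set vs \<subseteq> Basis \<longrightarrow>
     (1 + norm x) ^ N * norm (pderivs vs f x) \<le> M)"

text \<open>The polar of a ball of the order-\<open>N\<close> Schwartz seminorm, scaled by \<open>K\<close>: an
  equicontinuous set of tempered distributions.\<close>
definition tempered_bounded_by :: "real \<Rightarrow> nat \<Rightarrow> (('a::euclidean_space \<Rightarrow> complex) \<Rightarrow> complex) set" where
  "tempered_bounded_by K N = {T. (\<forall>f. f \<notin> schwartz \<longrightarrow> T f = 0) \<and>
     (\<forall>f\<in>schwartz. \<forall>g\<in>schwartz. \<forall>a b. T (\<lambda>x. a * f x + b * g x) = a * T f + b * T g) \<and>
     (\<forall>f\<in>schwartz. \<forall>M. schwartz_seminorm_le N f M \<longrightarrow> norm (T f) \<le> K * M)}"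

lemma schwartz_seminorm_le_imp_decay:
  "schwartz_seminorm_le N f M \<Longrightarrow> (1 + norm x) ^ N * norm (f x) \<le> M"
  unfolding schwartz_seminorm_le_def by (auto elim!: allE[of _ "[]"] simp del: One_nat_def)

lemma schwartz_seminorm_le_exists:
  fixes f :: "'a::euclidean_space \<Rightarrow> complex"
  assumes "f \<in> schwartz"
  shows "\<exists>M. schwartz_seminorm_le N f M"
proof -
  define L where "L = {vs. set vs \<subseteq> (Basis::'a set) \<and> length vs \<le> N}"
  have "finite L" unfolding L_def by (rule finite_lists_length_le) simp
  have "\<forall>vs\<in>L. \<exists>B. \<forall>x. (1 + norm x) ^ N * norm (pderivs vs f x) \<le> B"
    using assms unfolding schwartz_def L_def bounded_iff by (auto simp: norm_mult)
  then obtain B where B: "\<And>vs x. vs \<in> L \<Longrightarrow> (1 + norm x) ^ N * norm (pderivs vs f x) \<le> B vs"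
    by metis
  have "(1 + norm x) ^ N * norm (pderivs vs f x) \<le> (\<Sum>vs\<in>L. max 0 (B vs))" if "vs \<in> L" for vs x
    using B[OF that, of x] member_le_sum[OF that _ \<open>finite L\<close>, of "\<lambda>vs. max 0 (B vs)"] by simp
  then show ?thesis unfolding schwartz_seminorm_le_def L_def by blast
qed

lemma tempered_bounded_by_subset: "tempered_bounded_by K N \<subseteq> tempered_distributions"
  unfolding tempered_bounded_by_def tempered_distributions_def schwartz_seminorm_le_def by blast

lemma closed_tempered_bounded_by: "closed (tempered_bounded_by K N)"
proof -
  have eq: "tempered_bounded_by K N = (\<Inter>f\<in>-schwartz. {T. T f = 0}) \<inter>
     (\<Inter>f\<in>schwartz. \<Inter>g\<in>schwartz. \<Inter>a. \<Inter>b. {T. T (\<lambda>x. a * f x + b * g x) = a * T f + b * T g}) \<inter>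
     (\<Inter>f\<in>schwartz. \<Inter>M\<in>{M. schwartz_seminorm_le N f M}. {T. norm (T f) \<le> K * M})"
    unfolding tempered_bounded_by_def by auto
  show ?thesis unfolding eq
    by (intro closed_Int closed_INT ballI closed_Collect_eq closed_Collect_le
        continuous_intros continuous_on_product_coordinates)
qed

text \<open>Banach--Alaoglu: the set lies in a product of compact discs, one per test function.\<close>
lemma compact_tempered_bounded_by:
  "compact (tempered_bounded_by K N :: (('a::euclidean_space \<Rightarrow> complex) \<Rightarrow> complex) set)"
proof -
  define radius where "radius f = (if f \<in> schwartz then K * (SOME M. schwartz_seminorm_le N f M) else 0)"
    for f :: "'a \<Rightarrow> complex"
  have subset: "tempered_bounded_by K N \<subseteq> PiE UNIV (\<lambda>f. cball 0 (radius f))"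
  proof
    fix T :: "('a \<Rightarrow> complex) \<Rightarrow> complex" assume T: "T \<in> tempered_bounded_by K N"
    have "T f \<in> cball 0 (radius f)" for f
    proof (cases "f \<in> schwartz")
      case True
      then have "schwartz_seminorm_le N f (SOME M. schwartz_seminorm_le N f M)"
        by (rule someI_ex[OF schwartz_seminorm_le_exists])
      then show ?thesis using T True unfolding tempered_bounded_by_def radius_def by simp
    next
      case False
      then show ?thesis using T unfolding tempered_bounded_by_def radius_def by simp
    qed
    then show "T \<in> PiE UNIV (\<lambda>f. cball 0 (radius f))" by auto
  qed
  have "compactin (product_topology (\<lambda>_. euclidean) UNIV) (PiE UNIV (\<lambda>f. cball (0::complex) (radius f)))"
    by (subst compactin_PiE) auto
  then have "compact (PiE UNIV (\<lambda>f. cball (0::complex) (radius f)))"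
    by (simp add: euclidean_product_topology)
  then have "compact (PiE UNIV (\<lambda>f. cball 0 (radius f)) \<inter> tempered_bounded_by K N)"
    by (intro compact_Int_closed closed_tempered_bounded_by)
  also have "PiE UNIV (\<lambda>f. cball 0 (radius f)) \<inter> tempered_bounded_by K N = tempered_bounded_by K N"
    using subset by blast
  finally show ?thesis .
qed

lemma weak_star_precompact_subset_tempered_bounded_by:
  assumes "A \<subseteq> tempered_bounded_by K N"
  shows "weak_star_precompact A"
proof -
  have "closure A \<subseteq> tempered_bounded_by K N"
    using assms closed_tempered_bounded_by by (rule closure_minimal)
  then have "tempered_distributions \<inter> closure A = tempered_bounded_by K N \<inter> closure A"
    using tempered_bounded_by_subset by blast
  moreover have "compact (tempered_bounded_by K N \<inter> closure A)"
    by (rule compact_Int_closed[OF compact_tempered_bounded_by closed_closure])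
  ultimately show ?thesis
    unfolding weak_star_precompact_def using assms tempered_bounded_by_subset[of K N] by auto
qed

lemma autocorr_approx_eq_autocorrelation_integral:
  fixes \<nu> :: "'a::euclidean_space measure"
  shows "autocorr_approx \<nu> g hR R f = (if f \<in> schwartz then
     complex_of_real (1 / measure lborel (ball (0::'a) R))
       * autocorrelation_integral \<nu> (\<lambda>x. complex_of_real (hR x) * g x) f else 0)"
  by (simp add: autocorr_approx_def autocorrelation_integral_def mult_ac)

lemma van_Hove_weight:
  assumes "translation_bounded \<nu> g" and "smooth_fun hR"
    and hR: "\<And>x. indicator (ball 0 R) x \<le> hR x \<and> hR x \<le> indicator (cball 0 (R + 1)) x"
  shows "(\<lambda>x. complex_of_real (hR x) * g x) \<in> borel_measurable borel"
    and "norm (complex_of_real (hR x) * g x) \<le> indicator (cball 0 (R + 1)) x"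
proof -
  have "g \<in> borel_measurable borel" and norm_g: "\<And>x. norm (g x) = 1"
    using assms(1) by (simp_all add: translation_bounded_def)
  then show "(\<lambda>x. complex_of_real (hR x) * g x) \<in> borel_measurable borel"
    using smooth_fun_imp_borel_measurable[OF assms(2)] by measurable
  show "norm (complex_of_real (hR x) * g x) \<le> indicator (cball 0 (R + 1)) x"
    using hR[of x] norm_g[of x]
    by (cases "x \<in> ball 0 R") (auto simp: norm_mult indicator_def)
qed

lemma measure_cball_le_of_growth:
  fixes \<nu> :: "'a::euclidean_space measure"
  assumes growth: "\<And>y r. r \<ge> 1 \<Longrightarrow> emeasure \<nu> (cball y r) \<le> ennreal (C * r ^ DIM('a))"
    and "C \<ge> 0" "R \<ge> 1"
  shows "measure \<nu> (cball (0::'a) (R + 1)) \<le> C * 2 ^ DIM('a) * R ^ DIM('a)"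
proof -
  have "measure \<nu> (cball (0::'a) (R + 1)) \<le> enn2real (ennreal (C * (R + 1) ^ DIM('a)))"
    unfolding measure_def using assms by (intro enn2real_mono growth) simp_all
  also have "\<dots> = C * (R + 1) ^ DIM('a)"
    using assms by simp
  also have "\<dots> \<le> C * (2 * R) ^ DIM('a)"
    using assms by (intro mult_left_mono power_mono) auto
  finally show ?thesis
    by (simp add: power_mult_distrib mult_ac)
qed

text \<open>The normalisation \<open>1 / vol B_R\<close> exactly compensates the growth \<open>O(R^d)\<close> of the mass
  of the support of \<open>h_R\<close>, so the bound is uniform in \<open>R\<close>.\<close>
lemma autocorr_approx_in_tempered_bounded_by:
  fixes \<nu> :: "'a::euclidean_space measure" and hR :: "'a \<Rightarrow> real"
  assumes tb: "translation_bounded \<nu> g"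
    and hR: "smooth_fun hR" "\<And>x. indicator (ball 0 R) x \<le> hR x \<and> hR x \<le> indicator (cball 0 (R + 1)) x"
    and R: "R \<ge> 1"
    and decay: "\<And>y. (\<integral>\<^sup>+x. ennreal (1 / (1 + norm (x - y)) ^ Suc DIM('a)) \<partial>\<nu>) \<le> ennreal Cd" "Cd \<ge> 0"
    and growth: "\<And>y r. r \<ge> 1 \<Longrightarrow> emeasure \<nu> (cball y r) \<le> ennreal (Cg * r ^ DIM('a))" "Cg \<ge> 0"
  shows "autocorr_approx \<nu> g hR R
    \<in> tempered_bounded_by (Cd * Cg * 2 ^ DIM('a) / measure lborel (ball (0::'a) 1)) (Suc DIM('a))"
proof -
  define w where "w x = complex_of_real (hR x) * g x" for x
  note autocorrelation = translation_bounded_sets[OF tb] van_Hove_weight[OF tb hR, folded w_def]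
    borel_closed[OF closed_cball] translation_bounded_emeasure_compact_finite[OF tb compact_cball]
  have vol: "measure lborel (ball (0::'a) R) = R ^ DIM('a) * measure lborel (ball (0::'a) 1)"
    using content_ball_conv_unit_ball[of R "0::'a"] R by simp
  have vol_pos: "measure lborel (ball (0::'a) 1) > 0" by (rule content_ball_pos) simp
  have autocorr: "autocorr_approx \<nu> g hR R f = (if f \<in> schwartz then
      complex_of_real (1 / (R ^ DIM('a) * measure lborel (ball (0::'a) 1)))
        * autocorrelation_integral \<nu> w f else 0)" for f
    unfolding autocorr_approx_eq_autocorrelation_integral vol w_def ..
  show ?thesis
    unfolding tempered_bounded_by_def
  proof (intro CollectI conjI ballI allI impI)
    fix f :: "'a \<Rightarrow> complex" assume "f \<notin> schwartz"
    then show "autocorr_approx \<nu> g hR R f = 0" by (simp add: autocorr)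
  next
    fix f f' :: "'a \<Rightarrow> complex" and a b assume f: "f \<in> schwartz" and f': "f' \<in> schwartz"
    obtain B B' where "\<And>x. norm (f x) \<le> B" "\<And>x. norm (f' x) \<le> B'"
      using schwartz_imp_bounded[OF f] schwartz_imp_bounded[OF f'] by blast
    from autocorrelation_integral_linear[OF autocorrelation translation_bounded_sigma_finite[OF tb]
        schwartz_imp_borel_measurable[OF f] this(1) schwartz_imp_borel_measurable[OF f'] this(2)]
    show "autocorr_approx \<nu> g hR R (\<lambda>x. a * f x + b * f' x)
        = a * autocorr_approx \<nu> g hR R f + b * autocorr_approx \<nu> g hR R f'"
      using f f' schwartz_linear_combination[OF f f'] by (simp add: autocorr add_divide_distrib)
  next
    fix f :: "'a \<Rightarrow> complex" and M
    assume f: "f \<in> schwartz" and M: "schwartz_seminorm_le (Suc DIM('a)) f M"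
    have "M \<ge> 0" using order_trans[OF _ schwartz_seminorm_le_imp_decay[OF M, of 0]] by simp
    have "norm (autocorrelation_integral \<nu> w f) \<le> M * Cd * measure \<nu> (cball 0 (R + 1))"
      by (rule norm_autocorrelation_integral_le[OF autocorrelation decay schwartz_seminorm_le_imp_decay[OF M]])
    also have "\<dots> \<le> M * Cd * (Cg * 2 ^ DIM('a) * R ^ DIM('a))"
      using \<open>M \<ge> 0\<close> decay(2) by (intro mult_left_mono measure_cball_le_of_growth[OF growth R]) auto
    finally have bound: "norm (autocorrelation_integral \<nu> w f) \<le> M * Cd * (Cg * 2 ^ DIM('a) * R ^ DIM('a))" .
    have "norm (autocorr_approx \<nu> g hR R f)
        = norm (autocorrelation_integral \<nu> w f) / (R ^ DIM('a) * measure lborel (ball (0::'a) 1))"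
      using f R vol_pos by (simp add: autocorr norm_mult norm_divide norm_power)
    also have "\<dots> \<le> M * Cd * (Cg * 2 ^ DIM('a) * R ^ DIM('a)) / (R ^ DIM('a) * measure lborel (ball (0::'a) 1))"
      using R vol_pos by (intro divide_right_mono bound mult_nonneg_nonneg) auto
    also have "\<dots> = Cd * Cg * 2 ^ DIM('a) / measure lborel (ball (0::'a) 1) * M"
      using R vol_pos by (simp add: field_simps)
    finally show "norm (autocorr_approx \<nu> g hR R f)
        \<le> Cd * Cg * 2 ^ DIM('a) / measure lborel (ball (0::'a) 1) * M" .
  qed
qed

theorem proposition3p9:
  fixes \<nu> :: "'a::euclidean_space measure" and g :: "'a \<Rightarrow> complex"
    and h :: "real \<Rightarrow> 'a \<Rightarrow> real"
  assumes "translation_bounded \<nu> g"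
    and "smooth_approx_van_Hove h"
  shows "weak_star_precompact {autocorr_approx \<nu> g (h R) R | R. R \<ge> 1}"
proof -
  obtain Cd where "Cd \<ge> 0"
    "\<And>y. (\<integral>\<^sup>+x. ennreal (1 / (1 + norm (x - y)) ^ Suc DIM('a)) \<partial>\<nu>) \<le> ennreal Cd"
    using translation_bounded_decay_integral_bounded[OF assms(1)] by blast
  moreover obtain Cg where "Cg \<ge> 0" "\<And>y r. r \<ge> 1 \<Longrightarrow> emeasure \<nu> (cball y r) \<le> ennreal (Cg * r ^ DIM('a))"
    using translation_bounded_emeasure_cball_le[OF assms(1)] by blast
  ultimately have "autocorr_approx \<nu> g (h R) R
      \<in> tempered_bounded_by (Cd * Cg * 2 ^ DIM('a) / measure lborel (ball (0::'a) 1)) (Suc DIM('a))"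
    if "R \<ge> 1" for R
    using assms(2) that unfolding smooth_approx_van_Hove_def
    by (intro autocorr_approx_in_tempered_bounded_by[OF assms(1)]) auto
  then show ?thesis
    by (intro weak_star_precompact_subset_tempered_bounded_by) blast
qed

end
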